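(* Let $F:\mathbb{R}^d\to\mathbb{R}$ be a convex differentiable function with a (possibly non-unique) minimizer $x^*$, and let $\alpha\in(\frac12,1)$. Suppose that for all $t\ge1$, $\mathbb{E}[g_t\mid\mathcal{F}_t]=\nabla F(x_t)$ and $\|g_t\|\le G$ almost surely. Then Algorithm 1 with initial point $x_0\in\mathbb{R}^d$ and learning rates $\eta_t=\frac{1}{Gt^\alpha}$ satisfies, for all $T\ge1$, $$\mathbb{E}[F(\bar x_T)]\le F(x^* )+\frac{G}{T^{1-\alpha}}\Big(1+S\,\|x^*-x_0\|\big[2\ln(1+2\|x^*-x_0\|)+9S\big]\Big),$$ where $S=\sqrt{5+\frac{1}{2\alpha-1}}$ and $\bar x_T=\frac1T\sum_{t=1}^T x_t$.
   Context: $\|\cdot\|$ is the Euclidean norm on $\mathbb{R}^d$, $G>0$. Setting: an algorithm outputs iterates $x_1,x_2,\dots$; after outputting $x_t$ it receives a random vector $g_t\in\mathbb{R}^d$ (stochastic gradient). $\mathcal{F}_t$ is the $\sigma$-algebra generated by $x_1,\dots,x_t,g_1,\dots,g_{t-1}$. Auxiliary functions: for $\theta\in\mathbb{R}$, $S>0$, $Q\ge0$, $\psi^*(\theta,S,Q)=\exp\big(\max_{\beta\in[-1/2,1/2]}(\theta\beta-\beta^2S^2)-Q\big)$, which equals $\exp(\theta^2/(4S^2)-Q)$ if $|\theta|\le S^2$ and $\exp(|\theta|/2-S^2/4-Q)$ if $|\theta|>S^2$; and $\psi(x,S,Q)=\sup_{\theta\in\mathbb{R}}(\theta x-\psi^*(\theta,S,Q))$.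 Algorithm 1 (input: $x_0\in\mathbb{R}^d$ and learning rates $\eta_1,\eta_2,\dots$): set $S_0^2=4$, $Q_0=0$, $\theta_0=0\in\mathbb{R}^d$. For $t=1,2,\dots$: output $x_t=x_0+\frac{\theta_{t-1}}{2S_{t-1}^2}\exp\big(\frac{\|\theta_{t-1}\|^2}{4S_{t-1}^2}-Q_{t-1}\big)$ if $\|\theta_{t-1}\|\le S_{t-1}^2$, and $x_t=x_0+\frac{\theta_{t-1}}{2\|\theta_{t-1}\|}\exp\big(\frac{\|\theta_{t-1}\|}{2}-\frac{S_{t-1}^2}{4}-Q_{t-1}\big)$ otherwise (equivalently, $x_t-x_0$ is the unique minimizer of $x\mapsto \psi(\|x\|,S_{t-1},Q_{t-1})-\langle\theta_{t-1},x\rangle$); receive $g_t$; set $\ell_t=\eta_tg_t$, $S_t^2=S_{t-1}^2+\|\ell_t\|^2$ ($S_t>0$), $Q_t=Q_{t-1}+\|\ell_t\|^2/S_t^2$, $\theta_t=\theta_{t-1}-\ell_t$. *)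

theory Defs
  imports "HOL-Probability.Probability" "HOL-Probability.Conditional_Expectation"
begin

text \<open>State (S_t^2, Q_t, theta_t) of Algorithm 1 after t rounds, given the scaled
  gradients l_t = eta_t g_t (indexed from 1).\<close>
fun alg_state :: "(nat \<Rightarrow> 'd::euclidean_space) \<Rightarrow> nat \<Rightarrow> real \<times> real \<times> 'd" where
  "alg_state l 0 = (4, 0, 0)"
| "alg_state l (Suc t) =
     (case alg_state l t of (S2, Q, \<theta>) \<Rightarrow>
        (let S2' = S2 + (norm (l (Suc t)))\<^sup>2
         in (S2', Q + (norm (l (Suc t)))\<^sup>2 / S2', \<theta> - l (Suc t))))"

definition alg_out :: "real \<times> real \<times> 'd::euclidean_space \<Rightarrow> 'd" where
  "alg_out st = (case st of (S2, Q, \<theta>) \<Rightarrow>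
     (if norm \<theta> \<le> S2
      then (exp ((norm \<theta>)\<^sup>2 / (4 * S2) - Q) / (2 * S2)) *\<^sub>R \<theta>
      else (exp (norm \<theta> / 2 - S2 / 4 - Q) / (2 * norm \<theta>)) *\<^sub>R \<theta>))"

definition alg_x :: "'d::euclidean_space \<Rightarrow> (nat \<Rightarrow> real) \<Rightarrow> (nat \<Rightarrow> 'd) \<Rightarrow> nat \<Rightarrow> 'd" where
  "alg_x x0 \<eta> g t = x0 + alg_out (alg_state (\<lambda>s. \<eta> s *\<^sub>R g s) (t - 1))"

text \<open>Filtration F_t: sigma-algebra generated by g_1, ..., g_{t-1}
  (the iterates x_1..x_t are deterministic Borel functions of these).\<close>
definition grad_filtration :: "'m measure \<Rightarrow> (nat \<Rightarrow> 'm \<Rightarrow> 'd::euclidean_space) \<Rightarrow> nat \<Rightarrow> 'm measure" where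
  "grad_filtration M g t =
     vimage_algebra (space M) (\<lambda>\<omega>. restrict (\<lambda>i. g i \<omega>) {1..<t}) (PiM {1..<t} (\<lambda>_. borel))"

end

theory Submission
  imports Defs
begin

text \<open>Algorithm 1 bets on the losses \<open>l\<^sub>t = \<eta>\<^sub>t g\<^sub>t\<close>, \<open>\<parallel>l\<^sub>t\<parallel> \<le> 1\<close>, with the potential
  \<open>\<Phi>\<^sub>t = exp (\<psi>-exponent(S\<^sub>t\<^sup>2, \<parallel>\<theta>\<^sub>t\<parallel>) - Q\<^sub>t)\<close>, and its bet \<open>x\<^sub>t - x\<^sub>0\<close> is chosen so that
  \<open>\<Phi>\<^sub>t \<le> \<Phi>\<^sub>t\<^sub>-\<^sub>1 - l\<^sub>t \<bullet> (x\<^sub>t - x\<^sub>0)\<close>; this uses strong concavity of the exponent in the bet and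
  \<open>exp (-x - x\<^sup>2) \<le> 1 - x\<close> for \<open>\<bar>x\<bar> \<le> 1/2\<close>. Summing, the wealth \<open>-\<Sum> l\<^sub>t \<bullet> (x\<^sub>t - x\<^sub>0)\<close> is at least
  \<open>\<Phi>\<^sub>T - 1\<close>, and a Fenchel-type estimate of \<open>\<Phi>\<^sub>T\<close> gives regret at most
  \<open>1 + 2\<parallel>u\<parallel> ln (1 + 2\<parallel>u\<parallel>) + S\<^sub>T\<^sup>2 \<parallel>u\<parallel>\<close> against any comparator \<open>u\<close>; here \<open>S\<^sub>T\<^sup>2 \<le> S\<^sup>2\<close> because
  \<open>\<Sum> t\<^sup>-\<^sup>2\<^sup>\<alpha> \<le> 1 + 1/(2\<alpha> - 1)\<close>. Finally, online-to-batch: by convexity, \<open>F\<close> at the average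
  iterate exceeds \<open>F(x\<^sup>*)\<close> by at most \<open>G T\<^sup>\<alpha>\<^sup>-\<^sup>1 \<Sum> \<eta>\<^sub>t \<nabla>F(x\<^sub>t) \<bullet> (x\<^sub>t - x\<^sup>*)\<close>, and since \<open>x\<^sub>t\<close> is
  \<open>\<F>\<^sub>t\<close>-measurable, in expectation \<open>\<nabla>F(x\<^sub>t)\<close> may be replaced by \<open>g\<^sub>t\<close>, which turns this into the
  regret against \<open>u = x\<^sup>* - x\<^sub>0\<close>.\<close>

subsection \<open>The betting potential\<close>

text \<open>\<open>potential_exponent a r\<close> is \<open>max (\<beta> r - a \<beta>\<^sup>2)\<close> over \<open>\<bar>\<beta>\<bar> \<le> 1/2\<close>, the exponent of the paper's
  \<open>\<psi>\<^sup>*\<close> with \<open>a = S\<^sup>2\<close>, and \<open>best_bet a v\<close> maximizes \<open>b \<bullet> v - a \<parallel>b\<parallel>\<^sup>2\<close> over \<open>\<parallel>b\<parallel> \<le> 1/2\<close>.\<close>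

definition potential_exponent :: "real \<Rightarrow> real \<Rightarrow> real" where
  "potential_exponent a r = (if r \<le> a then r\<^sup>2 / (4 * a) else r / 2 - a / 4)"

definition best_bet :: "real \<Rightarrow> 'd::euclidean_space \<Rightarrow> 'd" where
  "best_bet a v = (if norm v \<le> a then (1 / (2 * a)) *\<^sub>R v else (1 / (2 * norm v)) *\<^sub>R v)"

lemma norm_best_bet_le:
  assumes "a > 0"
  shows "norm (best_bet a v) \<le> 1/2"
  using assms by (cases "norm v \<le> a") (simp_all add: best_bet_def field_simps)

lemma potential_exponent_best_bet:
  assumes "a > 0"
  shows "potential_exponent a (norm v) = best_bet a v \<bullet> v - a * (norm (best_bet a v))\<^sup>2"
proof (cases "norm v \<le> a")
  case True
  then show ?thesis
    using assms by (simp add: best_bet_def potential_exponent_def dot_square_norm field_simps power2_eq_square)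
next
  case False
  then have "v \<noteq> 0" using assms by auto
  with False assms show ?thesis
    by (simp add: best_bet_def potential_exponent_def dot_square_norm field_simps power2_eq_square)
qed

text \<open>The objective is \<open>2a\<close>-strongly concave in the bet, which gives the quadratic slack.\<close>

lemma bet_value_le_potential_exponent:
  fixes b v :: "'d::euclidean_space"
  assumes "a > 0" and "norm b \<le> 1/2"
  shows "b \<bullet> v - a * (norm b)\<^sup>2 \<le> potential_exponent a (norm v) - a * (norm (b - best_bet a v))\<^sup>2"
proof -
  define b0 where "b0 = best_bet a v"
  define d where "d = b - b0"
  have first_order: "d \<bullet> (v - (2 * a) *\<^sub>R b0) \<le> 0"
  proof (cases "norm v \<le> a")
    case True
    then have "v - (2 * a) *\<^sub>R b0 = 0" using assms by (simp add: b0_def best_bet_def)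
    then show ?thesis by simp
  next
    case False
    then have v_pos: "norm v > 0" using assms by linarith
    have b0_eq: "b0 = (1 / (2 * norm v)) *\<^sub>R v" using False by (simp add: b0_def best_bet_def)
    have "v - (2 * a) *\<^sub>R b0 = (2 * (norm v - a)) *\<^sub>R b0"
      using v_pos by (simp add: b0_eq algebra_simps)
    moreover have "d \<bullet> b0 \<le> 0"
    proof -
      have norm_b0: "norm b0 = 1/2" using v_pos by (simp add: b0_eq)
      have "b \<bullet> b0 \<le> norm b * norm b0" by (rule norm_cauchy_schwarz)
      also have "\<dots> \<le> 1/4" unfolding norm_b0 using assms(2) by simp
      finally show ?thesis
        by (simp add: d_def inner_diff_left dot_square_norm norm_b0 power2_eq_square)
    qed
    ultimately show ?thesis using False by (simp add: mult_nonneg_nonpos)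
  qed
  have "b \<bullet> v - a * (norm b)\<^sup>2
      = (b0 \<bullet> v - a * (norm b0)\<^sup>2) + d \<bullet> (v - (2 * a) *\<^sub>R b0) - a * (norm d)\<^sup>2"
    by (simp add: d_def power2_norm_eq_inner algebra_simps inner_commute)
  also have "\<dots> \<le> potential_exponent a (norm v) - a * (norm d)\<^sup>2"
    using first_order potential_exponent_best_bet[OF assms(1), of v] by (simp add: b0_def)
  finally show ?thesis by (simp add: d_def b0_def)
qed

lemma exp_minus_diff_square_le:
  fixes x :: real
  assumes "\<bar>x\<bar> \<le> 1/2"
  shows "exp (- x - x\<^sup>2) \<le> 1 - x"
proof (cases "x \<ge> 0")
  case True
  have taylor: "1 + (x + x\<^sup>2) + (x + x\<^sup>2)\<^sup>2 / 2 \<le> exp (x + x\<^sup>2)"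
    using True by (intro exp_lower_Taylor_quadratic) simp
  have "x\<^sup>2 \<le> 1/4" "x ^ 3 \<le> 1/8"
    using power_mono[of x "1/2" 2] power_mono[of x "1/2" 3] assms True
    by (auto simp: power2_eq_square power3_eq_cube)
  then have "0 \<le> x\<^sup>2 * (1 - x - x\<^sup>2 - x ^ 3) / 2"
    using assms True by simp
  also have "\<dots> = (1 + (x + x\<^sup>2) + (x + x\<^sup>2)\<^sup>2 / 2) * (1 - x) - 1"
    by (simp add: field_simps power2_eq_square power3_eq_cube)
  also have "\<dots> \<le> exp (x + x\<^sup>2) * (1 - x) - 1"
    using taylor assms by (intro diff_right_mono mult_right_mono) auto
  finally have "1 \<le> exp (x + x\<^sup>2) * (1 - x)" by simp
  have "exp (- x - x\<^sup>2) = 1 / exp (x + x\<^sup>2)"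
    by (simp add: exp_minus[symmetric] field_simps flip: exp_add)
  also have "\<dots> \<le> 1 - x" using \<open>1 \<le> exp (x + x\<^sup>2) * (1 - x)\<close> by (simp add: divide_le_eq mult.commute)
  finally show ?thesis .
next
  case False
  have "- x - x\<^sup>2 \<le> ln (1 - x)"
    using ln_one_plus_pos_lower_bound[of "- x"] False assms by simp
  then have "exp (- x - x\<^sup>2) \<le> exp (ln (1 - x))" by simp
  also have "\<dots> = 1 - x" using assms by simp
  finally show ?thesis .
qed

lemma bet_quadratic_slack:
  fixes b0 d l :: "'d::euclidean_space"
  assumes "a > 0" and b0: "norm b0 \<le> 1/2" and l: "norm l \<le> 1"
  shows "- a * (norm d)\<^sup>2 - (b0 + d) \<bullet> l - (norm l)\<^sup>2 * (norm (b0 + d))\<^sup>2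
           - (norm l)\<^sup>2 / (a + (norm l)\<^sup>2)
         \<le> - (b0 \<bullet> l) - (b0 \<bullet> l)\<^sup>2"
proof -
  define L where "L = norm l"
  define a' where "a' = a + L\<^sup>2"
  have L: "0 \<le> L" "L \<le> 1" using l by (auto simp: L_def)
  have a': "a' > 0" using assms(1) by (simp add: a'_def add_pos_nonneg)
  have "\<bar>b0 \<bullet> l\<bar>\<^sup>2 \<le> (norm b0 * L)\<^sup>2"
    using Cauchy_Schwarz_ineq2[of b0 l] by (intro power_mono) (auto simp: L_def)
  then have quad: "(b0 \<bullet> l)\<^sup>2 \<le> L\<^sup>2 * (norm b0)\<^sup>2"
    by (simp add: power_mult_distrib mult.commute)
  have lin: "d \<bullet> l \<ge> - (norm d * L)"
    using Cauchy_Schwarz_ineq2[of d l] unfolding L_def by linarith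
  have cross: "L\<^sup>2 * (2 * (b0 \<bullet> d)) \<ge> - (norm d * L)"
  proof -
    have "\<bar>b0 \<bullet> d\<bar> \<le> (1/2) * norm d"
      using Cauchy_Schwarz_ineq2[of b0 d] mult_right_mono[OF b0 norm_ge_zero[of d]] by linarith
    then have "L\<^sup>2 * (2 * (b0 \<bullet> d)) \<ge> L\<^sup>2 * (- norm d)"
      by (intro mult_left_mono) auto
    moreover have "L\<^sup>2 * norm d \<le> L * norm d"
      using L by (intro mult_right_mono) (auto simp: power2_eq_square mult_left_le)
    ultimately show ?thesis by (simp add: mult.commute)
  qed
  have square: "a' * (norm d)\<^sup>2 - 2 * (norm d * L) + L\<^sup>2 / a' \<ge> 0"
  proof -
    have "a' * (norm d)\<^sup>2 - 2 * (norm d * L) + L\<^sup>2 / a' = (a' * norm d - L)\<^sup>2 / a'"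
      using a' by (simp add: field_simps power2_eq_square)
    then show ?thesis using a' by simp
  qed
  have "- a * (norm d)\<^sup>2 - (b0 + d) \<bullet> l - L\<^sup>2 * (norm (b0 + d))\<^sup>2 - L\<^sup>2 / a'
      = - (b0 \<bullet> l) - L\<^sup>2 * (norm b0)\<^sup>2
        - (a' * (norm d)\<^sup>2 + d \<bullet> l + L\<^sup>2 * (2 * (b0 \<bullet> d)) + L\<^sup>2 / a')"
    by (simp add: a'_def power2_norm_eq_inner inner_commute algebra_simps)
  also have "\<dots> \<le> - (b0 \<bullet> l) - (b0 \<bullet> l)\<^sup>2"
    using quad lin cross square by linarith
  finally show ?thesis by (simp add: L_def a'_def)
qed

lemma potential_exponent_step:
  fixes \<theta> l :: "'d::euclidean_space"
  assumes a: "a > 0" and l: "norm l \<le> 1"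
  shows "potential_exponent (a + (norm l)\<^sup>2) (norm (\<theta> - l)) - (norm l)\<^sup>2 / (a + (norm l)\<^sup>2)
         \<le> potential_exponent a (norm \<theta>) - best_bet a \<theta> \<bullet> l - (best_bet a \<theta> \<bullet> l)\<^sup>2"
proof -
  define a' where "a' = a + (norm l)\<^sup>2"
  define b where "b = best_bet a' (\<theta> - l)"
  define b0 where "b0 = best_bet a \<theta>"
  have a': "a' > 0" using a by (simp add: a'_def add_pos_nonneg)
  have "potential_exponent a' (norm (\<theta> - l))
      = (b \<bullet> \<theta> - a * (norm b)\<^sup>2) - b \<bullet> l - (norm l)\<^sup>2 * (norm b)\<^sup>2"
    using potential_exponent_best_bet[OF a', of "\<theta> - l"]
    by (simp add: b_def a'_def algebra_simps)
  also have "\<dots> \<le> potential_exponent a (norm \<theta>) - a * (norm (b - b0))\<^sup>2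
                   - (b0 + (b - b0)) \<bullet> l - (norm l)\<^sup>2 * (norm (b0 + (b - b0)))\<^sup>2"
    using bet_value_le_potential_exponent[OF a norm_best_bet_le[OF a'], of "\<theta> - l" \<theta>]
    by (simp add: b_def b0_def)
  finally show ?thesis
    using bet_quadratic_slack[OF a norm_best_bet_le[OF a] l, of "b - b0" \<theta>]
    by (simp add: a'_def b0_def)
qed

lemma alg_out_eq:
  assumes "a > 0"
  shows "alg_out (a, Q, \<theta>) = exp (potential_exponent a (norm \<theta>) - Q) *\<^sub>R best_bet a \<theta>"
  using assms by (simp add: alg_out_def potential_exponent_def best_bet_def)

lemma potential_exponent_le:
  assumes "a > 0" "r \<ge> 0"
  shows "potential_exponent a r \<le> r"
proof (cases "r \<le> a")
  case True
  then have "r\<^sup>2 / (4 * a) \<le> r * a / (4 * a)"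
    using assms by (intro divide_right_mono) (auto simp: power2_eq_square mult_left_mono)
  with True assms show ?thesis by (simp add: potential_exponent_def)
qed (use assms in \<open>simp add: potential_exponent_def\<close>)

lemma alg_out_potential_step:
  fixes \<theta> l :: "'d::euclidean_space"
  assumes a: "a > 0" and l: "norm l \<le> 1"
  shows "exp (potential_exponent (a + (norm l)\<^sup>2) (norm (\<theta> - l)) - (Q + (norm l)\<^sup>2 / (a + (norm l)\<^sup>2)))
         \<le> exp (potential_exponent a (norm \<theta>) - Q) - l \<bullet> alg_out (a, Q, \<theta>)"
proof -
  define x where "x = best_bet a \<theta> \<bullet> l"
  define E where "E = exp (potential_exponent a (norm \<theta>) - Q)"
  have "\<bar>x\<bar> \<le> 1/2"
    using Cauchy_Schwarz_ineq2[of "best_bet a \<theta>" l] mult_mono[OF norm_best_bet_le[OF a] l, of \<theta>]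
    unfolding x_def by simp
  have "exp (potential_exponent (a + (norm l)\<^sup>2) (norm (\<theta> - l)) - (Q + (norm l)\<^sup>2 / (a + (norm l)\<^sup>2)))
      \<le> exp (potential_exponent a (norm \<theta>) - Q + (- x - x\<^sup>2))"
    using potential_exponent_step[OF a l, of \<theta>] by (simp add: x_def)
  also have "\<dots> = E * exp (- x - x\<^sup>2)" by (simp add: E_def exp_add)
  also have "\<dots> \<le> E * (1 - x)"
    using exp_minus_diff_square_le[OF \<open>\<bar>x\<bar> \<le> 1/2\<close>] by (simp add: E_def)
  also have "\<dots> = E - l \<bullet> alg_out (a, Q, \<theta>)"
    by (simp add: alg_out_eq[OF a] E_def x_def inner_commute algebra_simps)
  finally show ?thesis by (simp add: E_def)
qed

subsection \<open>Regret of Algorithm 1 against a fixed comparator\<close>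

definition alg_S2 :: "(nat \<Rightarrow> 'd::euclidean_space) \<Rightarrow> nat \<Rightarrow> real" where
  "alg_S2 l t = fst (alg_state l t)"

definition alg_Q :: "(nat \<Rightarrow> 'd::euclidean_space) \<Rightarrow> nat \<Rightarrow> real" where
  "alg_Q l t = fst (snd (alg_state l t))"

definition alg_theta :: "(nat \<Rightarrow> 'd::euclidean_space) \<Rightarrow> nat \<Rightarrow> 'd" where
  "alg_theta l t = snd (snd (alg_state l t))"

definition alg_potential :: "(nat \<Rightarrow> 'd::euclidean_space) \<Rightarrow> nat \<Rightarrow> real" where
  "alg_potential l t = exp (potential_exponent (alg_S2 l t) (norm (alg_theta l t)) - alg_Q l t)"

lemma alg_state_eq: "alg_state l t = (alg_S2 l t, alg_Q l t, alg_theta l t)"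
  by (simp add: alg_S2_def alg_Q_def alg_theta_def)

lemma alg_state_0: "alg_S2 l 0 = 4" "alg_Q l 0 = 0" "alg_theta l 0 = 0"
  by (simp_all add: alg_S2_def alg_Q_def alg_theta_def)

lemma alg_state_Suc:
  "alg_S2 l (Suc t) = alg_S2 l t + (norm (l (Suc t)))\<^sup>2"
  "alg_Q l (Suc t) = alg_Q l t + (norm (l (Suc t)))\<^sup>2 / (alg_S2 l t + (norm (l (Suc t)))\<^sup>2)"
  "alg_theta l (Suc t) = alg_theta l t - l (Suc t)"
  by (simp_all add: alg_S2_def alg_Q_def alg_theta_def Let_def split: prod.splits)

lemma alg_S2_eq_sum: "alg_S2 l t = 4 + (\<Sum>s=1..t. (norm (l s))\<^sup>2)"
  by (induction t) (simp_all add: alg_state_0 alg_state_Suc)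

lemma alg_theta_eq_sum: "alg_theta l t = - (\<Sum>s=1..t. l s)"
  by (induction t) (simp_all add: alg_state_0 alg_state_Suc)

lemma alg_S2_ge_4: "alg_S2 l t \<ge> 4"
  by (simp add: alg_S2_eq_sum sum_nonneg)

lemma alg_Q_bounds: "0 \<le> alg_Q l t \<and> alg_Q l t \<le> (alg_S2 l t - 4) / 4"
proof (induction t)
  case 0
  then show ?case by (simp add: alg_state_0)
next
  case (Suc t)
  define L2 where "L2 = (norm (l (Suc t)))\<^sup>2"
  have "L2 \<ge> 0" by (simp add: L2_def)
  moreover have "alg_S2 l t + L2 \<ge> 4" using alg_S2_ge_4[of l t] \<open>L2 \<ge> 0\<close> by linarith
  ultimately have "0 \<le> L2 / (alg_S2 l t + L2)" "L2 / (alg_S2 l t + L2) \<le> L2 / 4"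
    by (simp, intro divide_left_mono) auto
  then show ?case using Suc by (simp add: alg_state_Suc flip: L2_def)
qed

lemma norm_alg_out_le_exp:
  assumes "\<And>s. s \<in> {1..k} \<Longrightarrow> norm (l s) \<le> 1"
  shows "norm (alg_out (alg_state l k)) \<le> exp (real k)"
proof -
  have S2: "alg_S2 l k > 0" using alg_S2_ge_4[of l k] by linarith
  have "norm (alg_theta l k) \<le> (\<Sum>s=1..k. norm (l s))"
    unfolding alg_theta_eq_sum by (simp add: norm_sum)
  also have "\<dots> \<le> real k" using sum_mono[of "{1..k}" "\<lambda>s. norm (l s)" "\<lambda>_. 1"] assms by simp
  finally have "potential_exponent (alg_S2 l k) (norm (alg_theta l k)) - alg_Q l k \<le> real k"
    using potential_exponent_le[OF S2, of "norm (alg_theta l k)"] alg_Q_bounds[of l k] by simp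
  then have "norm (alg_out (alg_state l k)) \<le> exp (real k) * norm (best_bet (alg_S2 l k) (alg_theta l k))"
    by (simp add: alg_state_eq alg_out_eq[OF S2] mult_right_mono)
  also have "\<dots> \<le> exp (real k)" using norm_best_bet_le[OF S2, of "alg_theta l k"] by simp
  finally show ?thesis .
qed

lemma alg_gain_le_one_minus_potential:
  assumes "\<And>s. s \<in> {1..T} \<Longrightarrow> norm (l s) \<le> 1"
  shows "(\<Sum>t=1..T. l t \<bullet> alg_out (alg_state l (t - 1))) \<le> 1 - alg_potential l T"
  using assms
proof (induction T)
  case 0
  then show ?case by (simp add: alg_potential_def alg_state_0 potential_exponent_def)
next
  case (Suc T)
  have "alg_S2 l T > 0" using alg_S2_ge_4[of l T] by linarith
  then have "alg_potential l (Suc T) \<le> alg_potential l T - l (Suc T) \<bullet> alg_out (alg_state l T)"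
    using alg_out_potential_step[of "alg_S2 l T" "l (Suc T)" "alg_theta l T" "alg_Q l T"] Suc.prems
    by (simp add: alg_potential_def alg_state_Suc alg_state_eq[of l T])
  moreover have "(\<Sum>t=1..T. l t \<bullet> alg_out (alg_state l (t - 1))) \<le> 1 - alg_potential l T"
    using Suc by simp
  ultimately show ?case by simp
qed

text \<open>A Fenchel-type bound: for \<open>r > A\<close> use \<open>2 x y - e\<^sup>y \<le> 2 x ln (2 x) - 2 x\<close>.\<close>

lemma linear_minus_potential_le:
  fixes A Q r x :: real
  assumes "A > 0" "0 \<le> Q" "Q \<le> A / 4" "r \<ge> 0" "x \<ge> 0"
  shows "r * x - exp (potential_exponent A r - Q) \<le> 2 * x * ln (1 + 2 * x) + A * x"
proof (cases "r \<le> A")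
  case True
  have "r * x \<le> A * x" using True assms by (intro mult_right_mono) auto
  moreover have "x * ln (1 + 2 * x) \<ge> 0" using assms by simp
  ultimately show ?thesis using exp_gt_zero[of "potential_exponent A r - Q"] by linarith
next
  case False
  define y where "y = r / 2 - A / 4 - Q"
  have "potential_exponent A r - Q = y" using False by (simp add: potential_exponent_def y_def)
  moreover have "r * x = 2 * x * y + 2 * x * (A / 4 + Q)" by (simp add: y_def algebra_simps)
  moreover have "2 * x * (A / 4 + Q) \<le> 2 * x * (A / 2)" using assms by (intro mult_left_mono) auto
  moreover have "2 * x * y - exp y \<le> 2 * x * ln (1 + 2 * x)"
  proof (cases "x = 0")
    case False
    then have x: "x > 0" using assms by simp
    have "2 * x * (1 + (y - ln (2 * x))) \<le> 2 * x * exp (y - ln (2 * x))"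
      using x exp_ge_add_one_self by (intro mult_left_mono) auto
    also have "\<dots> = exp y" using x by (simp add: exp_diff)
    finally have "2 * x * y - exp y \<le> 2 * x * ln (2 * x) - 2 * x" by (simp add: algebra_simps)
    moreover have "2 * x * ln (2 * x) \<le> 2 * x * ln (1 + 2 * x)"
      using x by (intro mult_left_mono) auto
    ultimately show ?thesis using x by linarith
  qed simp
  ultimately show ?thesis by (simp add: algebra_simps)
qed

lemma alg_regret_le:
  fixes l :: "nat \<Rightarrow> 'd::euclidean_space"
  assumes "\<And>s. s \<in> {1..T} \<Longrightarrow> norm (l s) \<le> 1"
  shows "(\<Sum>t=1..T. l t \<bullet> (alg_out (alg_state l (t - 1)) - u))
          \<le> 1 + 2 * norm u * ln (1 + 2 * norm u) + alg_S2 l T * norm u"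
proof -
  have "(\<Sum>t=1..T. l t \<bullet> (alg_out (alg_state l (t - 1)) - u))
      = (\<Sum>t=1..T. l t \<bullet> alg_out (alg_state l (t - 1))) + alg_theta l T \<bullet> u"
    by (simp add: inner_diff_right sum_subtractf alg_theta_eq_sum inner_sum_left)
  also have "\<dots> \<le> 1 - alg_potential l T + norm (alg_theta l T) * norm u"
    using alg_gain_le_one_minus_potential[of T l, OF assms] norm_cauchy_schwarz[of "alg_theta l T" u]
    by linarith
  also have "\<dots> \<le> 1 + 2 * norm u * ln (1 + 2 * norm u) + alg_S2 l T * norm u"
    using linear_minus_potential_le[of "alg_S2 l T" "alg_Q l T" "norm (alg_theta l T)" "norm u"]
      alg_S2_ge_4[of l T] alg_Q_bounds[of l T]
    by (simp add: alg_potential_def)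
  finally show ?thesis .
qed

lemma powr_neg_le_diff_powr:
  fixes p :: real and t :: nat
  assumes "p > 1" "t \<ge> 1"
  shows "real (Suc t) powr (- p) \<le> (real t powr (1 - p) - real (Suc t) powr (1 - p)) / (p - 1)"
proof -
  have "\<exists>z. real t < z \<and> z < real t + 1 \<and>
     (real t + 1) powr (1 - p) - real t powr (1 - p) = (real t + 1 - real t) * ((1 - p) * z powr (1 - p - 1))"
  proof (rule MVT2)
    fix y assume "real t \<le> y"
    then show "((\<lambda>y. y powr (1 - p)) has_real_derivative (1 - p) * y powr (1 - p - 1)) (at y)"
      using assms by (intro has_real_derivative_powr) auto
  qed simp
  then obtain z where z: "real t < z" "z < real t + 1"
    "(real t + 1) powr (1 - p) - real t powr (1 - p) = (1 - p) * z powr (- p)"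
    by auto
  have "real (Suc t) powr (- p) \<le> z powr (- p)"
    using z assms by (intro powr_mono2') auto
  then have "(p - 1) * real (Suc t) powr (- p) \<le> (p - 1) * z powr (- p)"
    using assms by (intro mult_left_mono) auto
  also have "\<dots> = real t powr (1 - p) - real (Suc t) powr (1 - p)"
    using z(3) by (simp add: algebra_simps)
  finally show ?thesis using assms by (simp add: field_simps mult.commute)
qed

lemma sum_powr_neg_le:
  fixes p :: real
  assumes "p > 1"
  shows "(\<Sum>t=1..T. real t powr (- p)) \<le> 1 + 1 / (p - 1)"
proof (cases "T = 0")
  case False
  have "(\<Sum>t=1..T. real t powr (- p)) \<le> 1 + (1 - real T powr (1 - p)) / (p - 1)"
    using False
  proof (induction T)
    case (Suc T)
    show ?case
    proof (cases "T = 0")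
      case False
      then show ?thesis
        using Suc.IH powr_neg_le_diff_powr[OF assms, of T] by (simp add: diff_divide_distrib)
    qed simp
  qed simp
  moreover have "(1 - real T powr (1 - p)) / (p - 1) \<le> 1 / (p - 1)"
    using assms by (intro divide_right_mono) auto
  ultimately show ?thesis by linarith
qed (use assms in simp)

lemma one_div_powr_le_1:
  assumes "s \<ge> 1" "\<alpha> \<ge> 0"
  shows "1 / real s powr \<alpha> \<le> 1"
  using ge_one_powr_ge_zero[of "real s" \<alpha>] assms by simp

lemma alg_regret_le_decaying:
  fixes l :: "nat \<Rightarrow> 'd::euclidean_space" and \<alpha> :: real
  assumes \<alpha>: "1/2 < \<alpha>" and l: "\<And>s. s \<in> {1..T} \<Longrightarrow> norm (l s) \<le> 1 / real s powr \<alpha>"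
  shows "(\<Sum>t=1..T. l t \<bullet> (alg_out (alg_state l (t - 1)) - u))
          \<le> 1 + sqrt (5 + 1 / (2 * \<alpha> - 1)) * norm u *
                  (2 * ln (1 + 2 * norm u) + 9 * sqrt (5 + 1 / (2 * \<alpha> - 1)))"
proof -
  define S where "S = sqrt (5 + 1 / (2 * \<alpha> - 1))"
  define x where "x = norm u"
  have S2: "S\<^sup>2 = 5 + 1 / (2 * \<alpha> - 1)" and S1: "S \<ge> 1"
    using \<alpha> by (simp_all add: S_def)
  have l_le_1: "norm (l s) \<le> 1" if "s \<in> {1..T}" for s
    by (rule order_trans[OF l[OF that] one_div_powr_le_1]) (use that \<alpha> in auto)
  have "(norm (l s))\<^sup>2 \<le> real s powr (- (2 * \<alpha>))" if "s \<in> {1..T}" for s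
  proof -
    have "(norm (l s))\<^sup>2 \<le> (1 / real s powr \<alpha>)\<^sup>2" using l[OF that] by (intro power_mono) auto
    also have "\<dots> = real s powr (- (2 * \<alpha>))"
      using that by (simp add: power2_eq_square powr_minus powr_add[symmetric] field_simps)
    finally show ?thesis .
  qed
  then have "alg_S2 l T \<le> 4 + (\<Sum>s=1..T. real s powr (- (2 * \<alpha>)))"
    unfolding alg_S2_eq_sum by (intro add_left_mono sum_mono) auto
  also have "\<dots> \<le> S\<^sup>2" using sum_powr_neg_le[of "2 * \<alpha>" T] \<alpha> S2 by simp
  also have "\<dots> \<le> 9 * S\<^sup>2" by simp
  finally have "alg_S2 l T * x \<le> 9 * S\<^sup>2 * x"
    by (intro mult_right_mono) (auto simp: x_def)
  moreover have "2 * x * ln (1 + 2 * x) \<le> S * (2 * x * ln (1 + 2 * x))"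
    using mult_right_mono[OF S1, of "2 * x * ln (1 + 2 * x)"] by (simp add: x_def)
  ultimately have "1 + 2 * x * ln (1 + 2 * x) + alg_S2 l T * x
      \<le> 1 + S * x * (2 * ln (1 + 2 * x) + 9 * S)"
    by (simp add: algebra_simps power2_eq_square)
  then show ?thesis
    using alg_regret_le[of T l u] l_le_1 by (simp add: S_def x_def)
qed

subsection \<open>Convex differentiable functions\<close>

lemma has_real_derivative_along_line:
  fixes F :: "'d::euclidean_space \<Rightarrow> real"
  assumes "(F has_derivative (\<lambda>h. gradF x \<bullet> h)) (at x)"
  shows "((\<lambda>s. F (x + s *\<^sub>R w)) has_real_derivative (gradF x \<bullet> w)) (at 0)"
proof -
  have "((\<lambda>s::real. x + s *\<^sub>R w) has_derivative (\<lambda>h. h *\<^sub>R w)) (at 0)"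
    by (auto intro!: derivative_eq_intros)
  moreover have "(F has_derivative (\<lambda>h. gradF x \<bullet> h)) (at (x + (0::real) *\<^sub>R w))"
    using assms by simp
  ultimately have "((\<lambda>s. F (x + s *\<^sub>R w)) has_derivative (\<lambda>h. gradF x \<bullet> (h *\<^sub>R w))) (at 0)"
    by (rule has_derivative_compose)
  then show ?thesis
    by (simp add: has_field_derivative_def mult_commute_abs)
qed

lemma convex_on_gradient_inequality:
  fixes F :: "'d::euclidean_space \<Rightarrow> real"
  assumes cvx: "convex_on UNIV F" and der: "(F has_derivative (\<lambda>h. gradF x \<bullet> h)) (at x)"
  shows "F x + gradF x \<bullet> (y - x) \<le> F y"
proof -
  define \<phi> where "\<phi> = (\<lambda>s::real. F (x + s *\<^sub>R (y - x)))"
  have "convex_on UNIV \<phi>"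
  proof (rule convex_onI)
    fix t a b :: real
    assume t: "0 < t" "t < 1"
    have "x + ((1 - t) *\<^sub>R a + t *\<^sub>R b) *\<^sub>R (y - x)
        = (1 - t) *\<^sub>R (x + a *\<^sub>R (y - x)) + t *\<^sub>R (x + b *\<^sub>R (y - x))"
      by (simp add: algebra_simps)
    then show "\<phi> ((1 - t) *\<^sub>R a + t *\<^sub>R b) \<le> (1 - t) * \<phi> a + t * \<phi> b"
      unfolding \<phi>_def using convex_onD[OF cvx, of t] t by simp
  qed simp
  moreover have "(\<phi> has_real_derivative (gradF x \<bullet> (y - x))) (at 0 within UNIV)"
    unfolding \<phi>_def by (rule has_real_derivative_along_line[where F = F and gradF = gradF and w = "y - x", OF der])
  ultimately have "\<phi> 1 - \<phi> 0 \<ge> (gradF x \<bullet> (y - x)) * (1 - 0)"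
    by (intro convex_on_imp_above_tangent) auto
  then show ?thesis by (simp add: \<phi>_def)
qed

text \<open>Each partial derivative is the pointwise limit of continuous difference quotients.\<close>

lemma borel_measurable_gradient:
  fixes F :: "'d::euclidean_space \<Rightarrow> real"
  assumes der: "\<And>x. (F has_derivative (\<lambda>h. gradF x \<bullet> h)) (at x)"
  shows "gradF \<in> borel_measurable borel"
proof -
  note F_measurable[measurable] = borel_measurable_continuous_onI[OF has_derivative_continuous_on[OF der]]
  have partial[measurable]: "(\<lambda>x. gradF x \<bullet> b) \<in> borel_measurable borel" for b
  proof (rule borel_measurable_LIMSEQ_real)
    fix x :: 'd
    have "filterlim (\<lambda>n. inverse (real (Suc n))) (at 0) sequentially"
      unfolding filterlim_at using LIMSEQ_inverse_real_of_nat by auto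
    with DERIV_D[OF has_real_derivative_along_line[where F = F and gradF = gradF and x = x and w = b, OF der]]
    show "(\<lambda>n. (F (x + inverse (real (Suc n)) *\<^sub>R b) - F x) / inverse (real (Suc n)))
            \<longlonglongrightarrow> gradF x \<bullet> b"
      by (auto intro: filterlim_compose)
  qed measurable
  have "gradF = (\<lambda>x. \<Sum>b\<in>Basis. (gradF x \<bullet> b) *\<^sub>R b)"
    by (simp add: euclidean_representation)
  also have "\<dots> \<in> borel_measurable borel" by measurable
  finally show ?thesis .
qed

text \<open>Jensen and the gradient inequality; the gaps \<open>\<nabla>F(x\<^sub>t) \<bullet> (x\<^sub>t - x\<^sup>*)\<close> are nonnegative, so they
  may be reweighted by \<open>c \<eta>\<^sub>t \<ge> 1\<close>.\<close>

lemma convex_average_le_weighted_gaps: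
  fixes F :: "'d::euclidean_space \<Rightarrow> real" and x :: "nat \<Rightarrow> 'd"
  assumes cvx: "convex_on UNIV F" and der: "\<And>x. (F has_derivative (\<lambda>h. gradF x \<bullet> h)) (at x)"
    and min: "\<And>x. F xstar \<le> F x" and T: "T \<ge> 1"
    and weights: "\<And>t. t \<in> {1..T} \<Longrightarrow> 1 \<le> c * \<eta> t"
  shows "F ((1 / real T) *\<^sub>R (\<Sum>t=1..T. x t))
         \<le> F xstar + c / real T * (\<Sum>t=1..T. \<eta> t * (gradF (x t) \<bullet> (x t - xstar)))"
proof -
  define gap where "gap t = gradF (x t) \<bullet> (x t - xstar)" for t
  have tangent: "F (x t) \<le> F xstar + gap t" for t
    using convex_on_gradient_inequality[where F = F and gradF = gradF and x = "x t" and y = xstar, OF cvx der]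
    by (simp add: gap_def inner_diff_right)
  have "F ((1 / real T) *\<^sub>R (\<Sum>t=1..T. x t)) \<le> (\<Sum>t=1..T. (1 / real T) * F (x t))"
    using convex_on_sum[OF _ _ cvx, of "{1..T}" "\<lambda>_. 1 / real T" x] T
    by (simp add: scaleR_sum_right)
  also have "\<dots> \<le> (\<Sum>t=1..T. (1 / real T) * (F xstar + gap t))"
    using tangent by (intro sum_mono mult_left_mono) auto
  also have "\<dots> = F xstar + (1 / real T) * (\<Sum>t=1..T. gap t)"
    using T by (simp add: sum.distrib add_divide_distrib flip: sum_divide_distrib)
  also have "\<dots> \<le> F xstar + (1 / real T) * (\<Sum>t=1..T. c * (\<eta> t * gap t))"
  proof -
    have "gap t \<le> c * (\<eta> t * gap t)" if "t \<in> {1..T}" for t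
      using mult_right_mono[OF weights[OF that], of "gap t"] tangent[of t] min[of "x t"]
      by (simp add: mult.assoc)
    then show ?thesis by (intro add_left_mono mult_left_mono sum_mono) auto
  qed
  finally show ?thesis by (simp add: gap_def sum_distrib_left)
qed

subsection \<open>The iterates as random variables\<close>

lemma alg_state_cong:
  assumes "\<And>s. s \<in> {1..k} \<Longrightarrow> l s = l' s"
  shows "alg_state l k = alg_state l' k"
  using assms by (induction k) auto

lemma borel_measurable_alg_out[measurable]:
  assumes [measurable]: "a \<in> borel_measurable N" "q \<in> borel_measurable N" "\<theta> \<in> borel_measurable N"
  shows "(\<lambda>\<omega>. alg_out (a \<omega>, q \<omega>, \<theta> \<omega>)) \<in> borel_measurable N"
  unfolding alg_out_def by simp measurable

lemma measurable_alg_state_PiM: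
  fixes \<eta> :: "nat \<Rightarrow> real"
  assumes "k < t"
  shows "(\<lambda>f. alg_S2 (\<lambda>s. \<eta> s *\<^sub>R (f s :: 'd::euclidean_space)) k) \<in> borel_measurable (PiM {1..<t} (\<lambda>_. borel))
     \<and> (\<lambda>f. alg_Q (\<lambda>s. \<eta> s *\<^sub>R (f s :: 'd)) k) \<in> borel_measurable (PiM {1..<t} (\<lambda>_. borel))
     \<and> (\<lambda>f. alg_theta (\<lambda>s. \<eta> s *\<^sub>R (f s :: 'd)) k) \<in> borel_measurable (PiM {1..<t} (\<lambda>_. borel))"
  using assms
proof (induction k)
  case 0
  then show ?case by (simp add: alg_state_0)
next
  case (Suc k)
  then have [measurable]:
    "(\<lambda>f. alg_S2 (\<lambda>s. \<eta> s *\<^sub>R (f s :: 'd)) k) \<in> borel_measurable (PiM {1..<t} (\<lambda>_. borel))"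
    "(\<lambda>f. alg_Q (\<lambda>s. \<eta> s *\<^sub>R (f s :: 'd)) k) \<in> borel_measurable (PiM {1..<t} (\<lambda>_. borel))"
    "(\<lambda>f. alg_theta (\<lambda>s. \<eta> s *\<^sub>R (f s :: 'd)) k) \<in> borel_measurable (PiM {1..<t} (\<lambda>_. borel))"
    by auto
  have [measurable]: "(\<lambda>f. f (Suc k) :: 'd) \<in> borel_measurable (PiM {1..<t} (\<lambda>_. borel))"
    using Suc by (intro measurable_component_singleton) auto
  show ?case unfolding alg_state_Suc by (intro conjI; measurable)
qed

lemma alg_x_measurable_grad_filtration:
  fixes g :: "nat \<Rightarrow> 'm \<Rightarrow> 'd::euclidean_space"
  assumes "t \<ge> 1"
  shows "(\<lambda>\<omega>. alg_x x0 \<eta> (\<lambda>s. g s \<omega>) t) \<in> borel_measurable (grad_filtration M g t)"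
proof -
  define R where "R = (\<lambda>\<omega>. restrict (\<lambda>i. g i \<omega>) {1..<t})"
  define H where "H = (\<lambda>f. x0 + alg_out (alg_S2 (\<lambda>s. \<eta> s *\<^sub>R (f s :: 'd)) (t - 1),
     alg_Q (\<lambda>s. \<eta> s *\<^sub>R f s) (t - 1), alg_theta (\<lambda>s. \<eta> s *\<^sub>R f s) (t - 1)))"
  have "R \<in> measurable (grad_filtration M g t) (PiM {1..<t} (\<lambda>_. borel))"
    unfolding grad_filtration_def R_def
    by (rule measurable_vimage_algebra1) (auto simp: space_PiM)
  moreover have "H \<in> borel_measurable (PiM {1..<t} (\<lambda>_. borel))"
    unfolding H_def by (intro borel_measurable_add borel_measurable_const borel_measurable_alg_out)
      (use measurable_alg_state_PiM[of "t - 1" t \<eta>] assms in auto)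
  moreover have "alg_x x0 \<eta> (\<lambda>s. g s \<omega>) t = H (R \<omega>)" for \<omega>
  proof -
    have "alg_state (\<lambda>s. \<eta> s *\<^sub>R g s \<omega>) (t - 1) = alg_state (\<lambda>s. \<eta> s *\<^sub>R R \<omega> s) (t - 1)"
      by (rule alg_state_cong) (use assms in \<open>auto simp: R_def\<close>)
    then show ?thesis by (simp add: alg_x_def H_def alg_state_eq)
  qed
  ultimately show ?thesis by (simp add: measurable_compose[of R])
qed

lemma subalgebra_grad_filtration:
  assumes "\<And>s. s \<ge> 1 \<Longrightarrow> g s \<in> borel_measurable M"
  shows "subalgebra M (grad_filtration M g t)"
proof -
  have "(\<lambda>\<omega>. restrict (\<lambda>i. g i \<omega>) {1..<t}) \<in> measurable M (PiM {1..<t} (\<lambda>_. borel))"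
    by (rule measurable_restrict) (use assms in auto)
  from sets_image_in_sets[OF refl this] show ?thesis
    by (simp add: subalgebra_def grad_filtration_def)
qed

lemma borel_measurable_alg_x:
  assumes "\<And>s. s \<ge> 1 \<Longrightarrow> g s \<in> borel_measurable M" and "t \<ge> 1"
  shows "(\<lambda>\<omega>. alg_x x0 \<eta> (\<lambda>s. g s \<omega>) t) \<in> borel_measurable M"
  by (rule measurable_from_subalg[OF subalgebra_grad_filtration[OF assms(1)]
        alg_x_measurable_grad_filtration[OF assms(2)]])

subsection \<open>Stochastic gradients\<close>

lemma integral_inner_real_cond_exp:
  fixes V g h :: "'m \<Rightarrow> 'd::euclidean_space"
  assumes "prob_space M" and sub: "subalgebra M N"
    and V[measurable]: "V \<in> borel_measurable N"
    and [measurable]: "g \<in> borel_measurable M" "h \<in> borel_measurable M"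
    and V_bdd: "AE \<omega> in M. norm (V \<omega>) \<le> K" and g_bdd: "AE \<omega> in M. norm (g \<omega>) \<le> G"
    and cond_exp: "\<And>b. b \<in> Basis \<Longrightarrow>
           AE \<omega> in M. real_cond_exp M N (\<lambda>\<omega>. g \<omega> \<bullet> b) \<omega> = h \<omega> \<bullet> b"
  shows "integrable M (\<lambda>\<omega>. V \<omega> \<bullet> g \<omega>)" "integrable M (\<lambda>\<omega>. V \<omega> \<bullet> h \<omega>)"
    and "(\<integral>\<omega>. V \<omega> \<bullet> h \<omega> \<partial>M) = (\<integral>\<omega>. V \<omega> \<bullet> g \<omega> \<partial>M)"
proof -
  interpret prob_space M by fact
  interpret finite_measure_subalgebra M N by unfold_locales (rule sub)
  interpret sigma_finite_subalgebra M N by (rule finite_measure_subalgebra_is_sigma_finite) unfold_locales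
  have [measurable]: "V \<in> borel_measurable M" by (rule measurable_from_subalg[OF sub V])
  have component: "integrable M (\<lambda>\<omega>. (V \<omega> \<bullet> b) * (g \<omega> \<bullet> b))
      \<and> integrable M (\<lambda>\<omega>. (V \<omega> \<bullet> b) * (h \<omega> \<bullet> b))
      \<and> (\<integral>\<omega>. (V \<omega> \<bullet> b) * (h \<omega> \<bullet> b) \<partial>M) = (\<integral>\<omega>. (V \<omega> \<bullet> b) * (g \<omega> \<bullet> b) \<partial>M)"
    if b: "b \<in> Basis" for b
  proof -
    have "AE \<omega> in M. norm ((V \<omega> \<bullet> b) * (g \<omega> \<bullet> b)) \<le> norm (K * G)"
      using V_bdd g_bdd
    proof eventually_elim
      case (elim \<omega>)
      have "\<bar>V \<omega> \<bullet> b\<bar> * \<bar>g \<omega> \<bullet> b\<bar> \<le> norm (V \<omega>) * norm (g \<omega>)"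
        using Cauchy_Schwarz_ineq2[of "V \<omega>" b] Cauchy_Schwarz_ineq2[of "g \<omega>" b] b
        by (intro mult_mono) auto
      also have "\<dots> \<le> K * G"
        by (intro mult_mono) (use elim order_trans[OF norm_ge_zero elim(1)] in auto)
      also have "\<dots> \<le> \<bar>K * G\<bar>" by simp
      finally show ?case by (simp only: real_norm_def abs_mult)
    qed
    then have int_g: "integrable M (\<lambda>\<omega>. (V \<omega> \<bullet> b) * (g \<omega> \<bullet> b))"
      by (rule Bochner_Integration.integrable_bound[OF integrable_const[of "K * G"], rotated]) measurable
    have "(\<lambda>\<omega>. V \<omega> \<bullet> b) \<in> borel_measurable N" "(\<lambda>\<omega>. g \<omega> \<bullet> b) \<in> borel_measurable M"
      by measurable
    note swap = real_cond_exp_intg[OF int_g this]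
    have eq: "AE \<omega> in M. (V \<omega> \<bullet> b) * real_cond_exp M N (\<lambda>\<omega>. g \<omega> \<bullet> b) \<omega> = (V \<omega> \<bullet> b) * (h \<omega> \<bullet> b)"
      using cond_exp[OF b] by eventually_elim simp
    have meas_h: "(\<lambda>\<omega>. (V \<omega> \<bullet> b) * (h \<omega> \<bullet> b)) \<in> borel_measurable M" by measurable
    have "integrable M (\<lambda>\<omega>. (V \<omega> \<bullet> b) * (h \<omega> \<bullet> b))"
      by (rule integrable_cong_AE_imp[OF swap(1) meas_h eq])
    moreover have "(\<integral>\<omega>. (V \<omega> \<bullet> b) * real_cond_exp M N (\<lambda>\<omega>. g \<omega> \<bullet> b) \<omega> \<partial>M)
        = (\<integral>\<omega>. (V \<omega> \<bullet> b) * (h \<omega> \<bullet> b) \<partial>M)"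
      by (rule integral_cong_AE[OF borel_measurable_integrable[OF swap(1)] meas_h eq])
    ultimately show ?thesis using int_g swap(2) by simp
  qed
  have inner_sum: "V \<omega> \<bullet> f \<omega> = (\<Sum>b\<in>Basis. (V \<omega> \<bullet> b) * (f \<omega> \<bullet> b))" for f :: "'m \<Rightarrow> 'd" and \<omega>
    by (rule euclidean_inner)
  show "integrable M (\<lambda>\<omega>. V \<omega> \<bullet> g \<omega>)" "integrable M (\<lambda>\<omega>. V \<omega> \<bullet> h \<omega>)"
    unfolding inner_sum by (intro Bochner_Integration.integrable_sum; use component in blast)+
  show "(\<integral>\<omega>. V \<omega> \<bullet> h \<omega> \<partial>M) = (\<integral>\<omega>. V \<omega> \<bullet> g \<omega> \<partial>M)"
    unfolding inner_sum using component by (simp add: Bochner_Integration.integral_sum)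
qed

text \<open>By the tower property the true gradients may be replaced by the stochastic ones, and then the
  regret bound applies pathwise.\<close>

lemma alg_expected_weighted_gap_le:
  fixes M :: "'m measure" and g :: "nat \<Rightarrow> 'm \<Rightarrow> 'd::euclidean_space" and gradF :: "'d \<Rightarrow> 'd"
    and x0 xstar :: 'd and G \<alpha> :: real
  defines "\<eta> \<equiv> \<lambda>s. 1 / (G * real s powr \<alpha>)"
  defines "X \<equiv> \<lambda>t \<omega>. alg_x x0 \<eta> (\<lambda>s. g s \<omega>) t"
  assumes "prob_space M" and \<alpha>: "1/2 < \<alpha>" and G: "G > 0"
    and [measurable]: "gradF \<in> borel_measurable borel"
    and g_meas: "\<And>t. t \<ge> 1 \<Longrightarrow> g t \<in> borel_measurable M"
    and g_bdd: "\<And>t. t \<ge> 1 \<Longrightarrow> AE \<omega> in M. norm (g t \<omega>) \<le> G"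
    and cond_exp: "\<And>t b. t \<ge> 1 \<Longrightarrow> b \<in> Basis \<Longrightarrow>
           AE \<omega> in M. real_cond_exp M (grad_filtration M g t) (\<lambda>\<omega>. g t \<omega> \<bullet> b) \<omega> = gradF (X t \<omega>) \<bullet> b"
  shows "integrable M (\<lambda>\<omega>. \<Sum>t=1..T. \<eta> t * (gradF (X t \<omega>) \<bullet> (X t \<omega> - xstar)))"
    and "(\<integral>\<omega>. (\<Sum>t=1..T. \<eta> t * (gradF (X t \<omega>) \<bullet> (X t \<omega> - xstar))) \<partial>M)
         \<le> 1 + sqrt (5 + 1 / (2 * \<alpha> - 1)) * norm (xstar - x0) *
               (2 * ln (1 + 2 * norm (xstar - x0)) + 9 * sqrt (5 + 1 / (2 * \<alpha> - 1)))"
proof -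
  interpret prob_space M by fact
  define V where "V t \<omega> = \<eta> t *\<^sub>R (X t \<omega> - xstar)" for t \<omega>
  define l where "l = (\<lambda>\<omega> s. \<eta> s *\<^sub>R g s \<omega>)"
  have \<eta>_pos: "\<eta> t > 0" if "t \<ge> 1" for t using that G by (simp add: \<eta>_def)
  have X_eq: "X t \<omega> = x0 + alg_out (alg_state (l \<omega>) (t - 1))" for t \<omega>
    by (simp add: X_def alg_x_def l_def)
  have sub: "subalgebra M (grad_filtration M g t)" for t
    by (rule subalgebra_grad_filtration[OF g_meas])
  have V_meas: "V t \<in> borel_measurable (grad_filtration M g t)" if "t \<ge> 1" for t
  proof -
    have [measurable]: "X t \<in> borel_measurable (grad_filtration M g t)"
      unfolding X_def by (rule alg_x_measurable_grad_filtration[OF that])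
    show ?thesis unfolding V_def by measurable
  qed
  have [measurable]: "X t \<in> borel_measurable M" if "t \<ge> 1" for t
    unfolding X_def by (rule borel_measurable_alg_x[OF g_meas that])
  have losses: "AE \<omega> in M. \<forall>s\<in>{1..T}. norm (l \<omega> s) \<le> 1 / real s powr \<alpha>"
  proof -
    have "AE \<omega> in M. \<forall>s\<in>{1..T}. norm (g s \<omega>) \<le> G"
      by (rule AE_finite_allI) (use g_bdd in auto)
    then show ?thesis
      by eventually_elim (use G in \<open>auto simp: l_def \<eta>_def field_simps\<close>)
  qed
  have V_bdd: "AE \<omega> in M. norm (V t \<omega>) \<le> \<eta> t * (norm x0 + exp (real T) + norm xstar)"
    if t: "t \<in> {1..T}" for t
    using losses
  proof eventually_elim
    case (elim \<omega>)
    have "norm (l \<omega> s) \<le> 1" if "s \<in> {1..t - 1}" for s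
      by (rule order_trans[OF elim[rule_format] one_div_powr_le_1]) (use that t \<alpha> in auto)
    then have "norm (alg_out (alg_state (l \<omega>) (t - 1))) \<le> exp (real T)"
      using norm_alg_out_le_exp[of "t - 1" "l \<omega>"] t by (auto intro: order_trans)
    then have "norm (X t \<omega> - xstar) \<le> norm x0 + exp (real T) + norm xstar"
      unfolding X_eq by (smt (verit) norm_triangle_ineq norm_triangle_ineq4)
    then show ?case
      using \<eta>_pos[of t] t by (simp add: V_def mult_left_mono)
  qed
  have swap: "integrable M (\<lambda>\<omega>. V t \<omega> \<bullet> g t \<omega>)"
    "integrable M (\<lambda>\<omega>. V t \<omega> \<bullet> gradF (X t \<omega>))"
    "(\<integral>\<omega>. V t \<omega> \<bullet> gradF (X t \<omega>) \<partial>M) = (\<integral>\<omega>. V t \<omega> \<bullet> g t \<omega> \<partial>M)"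
    if t: "t \<in> {1..T}" for t
    using integral_inner_real_cond_exp[OF \<open>prob_space M\<close> sub V_meas _ _ V_bdd[OF t] g_bdd cond_exp] t
      g_meas[of t]
    by auto
  have gap_eq: "\<eta> t * (gradF (X t \<omega>) \<bullet> (X t \<omega> - xstar)) = V t \<omega> \<bullet> gradF (X t \<omega>)" for t \<omega>
    by (simp add: V_def inner_commute)
  have regret: "AE \<omega> in M. (\<Sum>t=1..T. V t \<omega> \<bullet> g t \<omega>)
      \<le> 1 + sqrt (5 + 1 / (2 * \<alpha> - 1)) * norm (xstar - x0) *
            (2 * ln (1 + 2 * norm (xstar - x0)) + 9 * sqrt (5 + 1 / (2 * \<alpha> - 1)))"
    using losses
  proof eventually_elim
    case (elim \<omega>)
    have "V t \<omega> \<bullet> g t \<omega> = l \<omega> t \<bullet> (alg_out (alg_state (l \<omega>) (t - 1)) - (xstar - x0))" for t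
      by (simp add: V_def l_def X_eq inner_commute algebra_simps)
    then show ?case
      using alg_regret_le_decaying[OF \<alpha>, of T "l \<omega>" "xstar - x0"] elim by simp
  qed
  show "integrable M (\<lambda>\<omega>. \<Sum>t=1..T. \<eta> t * (gradF (X t \<omega>) \<bullet> (X t \<omega> - xstar)))"
    unfolding gap_eq using swap by (intro Bochner_Integration.integrable_sum) auto
  have "(\<integral>\<omega>. (\<Sum>t=1..T. \<eta> t * (gradF (X t \<omega>) \<bullet> (X t \<omega> - xstar))) \<partial>M)
      = (\<integral>\<omega>. (\<Sum>t=1..T. V t \<omega> \<bullet> g t \<omega>) \<partial>M)"
    unfolding gap_eq using swap by (simp add: Bochner_Integration.integral_sum)
  also have "\<dots> \<le> 1 + sqrt (5 + 1 / (2 * \<alpha> - 1)) * norm (xstar - x0) *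
            (2 * ln (1 + 2 * norm (xstar - x0)) + 9 * sqrt (5 + 1 / (2 * \<alpha> - 1)))"
    using swap by (intro integral_le_const regret Bochner_Integration.integrable_sum) auto
  finally show "(\<integral>\<omega>. (\<Sum>t=1..T. \<eta> t * (gradF (X t \<omega>) \<bullet> (X t \<omega> - xstar))) \<partial>M)
      \<le> 1 + sqrt (5 + 1 / (2 * \<alpha> - 1)) * norm (xstar - x0) *
            (2 * ln (1 + 2 * norm (xstar - x0)) + 9 * sqrt (5 + 1 / (2 * \<alpha> - 1)))" .
qed

lemma (in prob_space) expectation_le_add_expectation:
  fixes f Z :: "'a \<Rightarrow> real"
  assumes "f \<in> borel_measurable M" and "integrable M Z"
    and "\<And>\<omega>. \<omega> \<in> space M \<Longrightarrow> c \<le> f \<omega>" and "\<And>\<omega>. \<omega> \<in> space M \<Longrightarrow> f \<omega> \<le> c + Z \<omega>"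
  shows "expectation f \<le> c + expectation Z"
proof -
  have "integrable M (\<lambda>\<omega>. c + Z \<omega>)" using assms(2) by simp
  moreover have "integrable M f"
  proof (rule Bochner_Integration.integrable_bound)
    show "integrable M (\<lambda>\<omega>. \<bar>c\<bar> + \<bar>Z \<omega>\<bar>)" using assms(2) by simp
    show "AE \<omega> in M. norm (f \<omega>) \<le> norm (\<bar>c\<bar> + \<bar>Z \<omega>\<bar>)"
      using assms(3,4) by (force simp: abs_le_iff)
  qed fact
  ultimately have "expectation f \<le> expectation (\<lambda>\<omega>. c + Z \<omega>)"
    using assms by (intro integral_mono) auto
  then show ?thesis using assms(2) prob_space by simp
qed

theorem theorem2:
  fixes M :: "'m measure"
    and F :: "'d::euclidean_space \<Rightarrow> real"
    and gradF :: "'d \<Rightarrow> 'd"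
    and g :: "nat \<Rightarrow> 'm \<Rightarrow> 'd"
    and xstar x0 :: 'd
    and G \<alpha> :: real
    and T :: nat
  assumes "prob_space M"
    and "convex_on UNIV F"
    and "\<And>x. (F has_derivative (\<lambda>h. gradF x \<bullet> h)) (at x)"
    and "\<And>x. F xstar \<le> F x"
    and "1/2 < \<alpha>" and "\<alpha> < 1"
    and "G > 0"
    and "\<And>t. t \<ge> 1 \<Longrightarrow> g t \<in> borel_measurable M"
    and "\<And>t. t \<ge> 1 \<Longrightarrow> AE \<omega> in M. norm (g t \<omega>) \<le> G"
    and "\<And>t b. t \<ge> 1 \<Longrightarrow> b \<in> Basis \<Longrightarrow>
           AE \<omega> in M. real_cond_exp M (grad_filtration M g t) (\<lambda>\<omega>. g t \<omega> \<bullet> b) \<omega>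
              = gradF (alg_x x0 (\<lambda>s. 1 / (G * real s powr \<alpha>)) (\<lambda>s. g s \<omega>) t) \<bullet> b"
    and "T \<ge> 1"
  shows "prob_space.expectation M
           (\<lambda>\<omega>. F ((1 / real T) *\<^sub>R (\<Sum>t=1..T. alg_x x0 (\<lambda>s. 1 / (G * real s powr \<alpha>)) (\<lambda>s. g s \<omega>) t)))
         \<le> F xstar + G / real T powr (1 - \<alpha>) *
             (1 + sqrt (5 + 1 / (2 * \<alpha> - 1)) * norm (xstar - x0) *
                  (2 * ln (1 + 2 * norm (xstar - x0)) + 9 * sqrt (5 + 1 / (2 * \<alpha> - 1))))"
proof -
  interpret prob_space M by fact
  define \<eta> where "\<eta> = (\<lambda>s::nat. 1 / (G * real s powr \<alpha>))"
  define X where "X t \<omega> = alg_x x0 \<eta> (\<lambda>s. g s \<omega>) t" for t \<omega>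
  define gap where "gap = (\<lambda>\<omega>. \<Sum>t=1..T. \<eta> t * (gradF (X t \<omega>) \<bullet> (X t \<omega> - xstar)))"
  have gap_bounds: "integrable M gap"
    "(\<integral>\<omega>. gap \<omega> \<partial>M) \<le> 1 + sqrt (5 + 1 / (2 * \<alpha> - 1)) * norm (xstar - x0) *
        (2 * ln (1 + 2 * norm (xstar - x0)) + 9 * sqrt (5 + 1 / (2 * \<alpha> - 1)))"
    using alg_expected_weighted_gap_le[OF assms(1,5,7) borel_measurable_gradient[OF assms(3)]
          assms(8,9,10), where T = T and xstar = xstar]
    unfolding gap_def X_def \<eta>_def by simp_all
  have "(\<lambda>\<omega>. F ((1 / real T) *\<^sub>R (\<Sum>t=1..T. X t \<omega>))) \<in> borel_measurable M"
    by (rule borel_measurable_continuous_on[OF has_derivative_continuous_on[OF assms(3)]],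
        intro borel_measurable_scaleR borel_measurable_const borel_measurable_sum)
      (auto simp: X_def intro: borel_measurable_alg_x[OF assms(8)])
  moreover have "F ((1 / real T) *\<^sub>R (\<Sum>t=1..T. X t \<omega>)) \<le> F xstar + G / real T powr (1 - \<alpha>) * gap \<omega>" for \<omega>
  proof -
    have "1 \<le> G * real T powr \<alpha> * \<eta> t" if "t \<in> {1..T}" for t
      using that assms(5,7) powr_mono2[of \<alpha> "real t" "real T"] by (simp add: \<eta>_def)
    then show ?thesis
      using convex_average_le_weighted_gaps[OF assms(2,3,4,11), of "G * real T powr \<alpha>" \<eta> "\<lambda>t. X t \<omega>"]
        assms(11) by (simp add: gap_def powr_diff)
  qed
  ultimately have "expectation (\<lambda>\<omega>. F ((1 / real T) *\<^sub>R (\<Sum>t=1..T. X t \<omega>)))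
      \<le> F xstar + expectation (\<lambda>\<omega>. G / real T powr (1 - \<alpha>) * gap \<omega>)"
    using gap_bounds(1) assms(4) by (intro expectation_le_add_expectation) auto
  also have "\<dots> = F xstar + G / real T powr (1 - \<alpha>) * expectation gap" by simp
  also have "\<dots> \<le> F xstar + G / real T powr (1 - \<alpha>) *
      (1 + sqrt (5 + 1 / (2 * \<alpha> - 1)) * norm (xstar - x0) *
        (2 * ln (1 + 2 * norm (xstar - x0)) + 9 * sqrt (5 + 1 / (2 * \<alpha> - 1))))"
    using gap_bounds(2) assms(7) by (intro add_left_mono mult_left_mono) auto
  finally show ?thesis by (simp add: X_def \<eta>_def)
qed

end
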